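(* Let $n\ge1$, $1\le k\le n$, and consider a U(1)-invariant Hamiltonian on $n$ qubits of the form $$H(t)=H_{(k-1)}(t)+\sum_{j_1<\cdots<j_k} a^{(k)}_{j_1\cdots j_k}(t)\,Z_{j_1}Z_{j_2}\cdots Z_{j_k},\qquad 0\le t\le T,$$ where $H_{(k-1)}(t)$ is, at every time, a U(1)-invariant Hermitian operator that is $(k-1)$-local, and the $a^{(k)}_{j_1\cdots j_k}(t)$ are real piecewise-continuous functions. Then $$\beta_k=-2^k\int_0^T\sum_{j_1<\cdots<j_k}a^{(k)}_{j_1\cdots j_k}(t)\,dt\pmod{2\pi}.$$
   Context: Qubits $1,\dots,n$, Hilbert space $(\mathbb{C}^2)^{\otimes n}$, $Z_j$ the Pauli $Z$ on qubit $j$. An operator is $k$-local if it is a sum of terms each acting non-trivially on at most $k$ qubits. For $m=0,\dots,n$, $\Pi_m$ is the projector onto the span of computational basis states with exactly $m$ qubits in state $|1\rangle$. A Hamiltonian is U(1)-invariant if it commutes with $\sum_j Z_j$. For such $H(t)$, $V=\mathcal{T}\exp(-i\int_0^TH(t)dt)$ (time-ordered exponential) satisfies $V=\bigoplus_m V_m$ with $V_m$ the restriction of $V$ to the range of $\Pi_m$; $\theta_m=\arg\det(V_m)\in(-\pi,\pi]$. Define $$\beta_k=\sum_{m=0}^k(-1)^m\binom{n-m}{k-m}\theta_m\pmod{2\pi}.$$ *)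

theory Defs
  imports "HOL-Analysis.Analysis" "Jordan_Normal_Form.Determinant" "Jordan_Normal_Form.DL_Submatrix"
begin

text \<open>Qubits are indexed 0,...,n-1. The computational basis state with index x < 2^n
  has qubit j in state |1> iff bit x j. Operators are 2^n x 2^n complex matrices.\<close>

definition dimH :: "nat \<Rightarrow> nat" where
  "dimH n = 2 ^ n"

definition popcount :: "nat \<Rightarrow> nat \<Rightarrow> nat" where
  "popcount n x = card {j. j < n \<and> bit x j}"

definition Zop :: "nat \<Rightarrow> nat \<Rightarrow> complex mat" where
  "Zop n j = mat (dimH n) (dimH n)
     (\<lambda>(x,y). if x = y then (if bit x j then -1 else 1) else 0)"

definition Zprod :: "nat \<Rightarrow> nat set \<Rightarrow> complex mat" where
  "Zprod n S = mat (dimH n) (dimH n)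
     (\<lambda>(x,y). if x = y then (\<Prod>j\<in>S. if bit x j then -1 else 1) else 0)"

definition Ztot :: "nat \<Rightarrow> complex mat" where
  "Ztot n = mat (dimH n) (dimH n) (\<lambda>(x,y). \<Sum>j<n. Zop n j $$ (x,y))"

definition U1_invariant :: "nat \<Rightarrow> complex mat \<Rightarrow> bool" where
  "U1_invariant n A \<longleftrightarrow> A * Ztot n = Ztot n * A"

definition hermitian_op :: "nat \<Rightarrow> complex mat \<Rightarrow> bool" where
  "hermitian_op n A \<longleftrightarrow> A \<in> carrier_mat (dimH n) (dimH n) \<and>
     (\<forall>x < dimH n. \<forall>y < dimH n. A $$ (x,y) = cnj (A $$ (y,x)))"

text \<open>A acts non-trivially only on the qubits in S, i.e. A = B \<otimes> Id on the complement of S.\<close>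
definition acts_on :: "nat \<Rightarrow> nat set \<Rightarrow> complex mat \<Rightarrow> bool" where
  "acts_on n S A \<longleftrightarrow> S \<subseteq> {..<n} \<and> A \<in> carrier_mat (dimH n) (dimH n) \<and>
     (\<forall>x < dimH n. \<forall>y < dimH n.
        (\<exists>j<n. j \<notin> S \<and> bit x j \<noteq> bit y j) \<longrightarrow> A $$ (x,y) = 0) \<and>
     (\<forall>x < dimH n. \<forall>y < dimH n. \<forall>x' < dimH n. \<forall>y' < dimH n.
        (\<forall>j<n. j \<notin> S \<longrightarrow> bit x j = bit y j) \<longrightarrow>
        (\<forall>j<n. j \<notin> S \<longrightarrow> bit x' j = bit y' j) \<longrightarrow>
        (\<forall>j\<in>S. bit x j = bit x' j \<and> bit y j = bit y' j) \<longrightarrow>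
        A $$ (x,y) = A $$ (x',y'))"

definition k_local :: "nat \<Rightarrow> nat \<Rightarrow> complex mat \<Rightarrow> bool" where
  "k_local n k A \<longleftrightarrow> A \<in> carrier_mat (dimH n) (dimH n) \<and>
     (\<exists>ts :: (nat set \<times> complex mat) list.
        (\<forall>(S,B) \<in> set ts. card S \<le> k \<and> acts_on n S B) \<and>
        (\<forall>x < dimH n. \<forall>y < dimH n. A $$ (x,y) = (\<Sum>p \<leftarrow> ts. snd p $$ (x,y))))"

definition piecewise_cont :: "real \<Rightarrow> (real \<Rightarrow> 'a::real_normed_vector) \<Rightarrow> bool" where
  "piecewise_cont T f \<longleftrightarrow>
     (\<exists>D. finite D \<and> continuous_on ({0..T} - D) f) \<and>
     (\<forall>t\<in>{0..T}. (0 < t \<longrightarrow> (\<exists>l. (f \<longlongrightarrow> l) (at_left t))) \<and>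
                  (t < T \<longrightarrow> (\<exists>l. (f \<longlongrightarrow> l) (at_right t))))"

text \<open>V is the time-ordered exponential of -i H on [0,T]: it solves the Dyson integral
  equation V(t) = I - i \<integral>_0^t H(s) V(s) ds, written entrywise.\<close>
definition time_ordered_exp :: "nat \<Rightarrow> real \<Rightarrow> (real \<Rightarrow> complex mat) \<Rightarrow> (real \<Rightarrow> complex mat) \<Rightarrow> bool" where
  "time_ordered_exp n T H V \<longleftrightarrow>
     (\<forall>t\<in>{0..T}. V t \<in> carrier_mat (dimH n) (dimH n) \<and>
        (\<forall>x < dimH n. \<forall>y < dimH n.
           ((\<lambda>s. - \<i> * (H s * V s) $$ (x,y)) has_integral
              (V t $$ (x,y) - 1\<^sub>m (dimH n) $$ (x,y))) {0..t}))"

definition weight_space :: "nat \<Rightarrow> nat \<Rightarrow> nat set" where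
  "weight_space n m = {x. x < dimH n \<and> popcount n x = m}"

text \<open>theta_m = arg det (V restricted to the range of Pi_m), in (-pi, pi].\<close>
definition theta :: "nat \<Rightarrow> complex mat \<Rightarrow> nat \<Rightarrow> real" where
  "theta n V m = Arg (det (submatrix V (weight_space n m) (weight_space n m)))"

text \<open>beta_k, as a real representative (congruence mod 2 pi is stated separately).\<close>
definition beta :: "nat \<Rightarrow> complex mat \<Rightarrow> nat \<Rightarrow> real" where
  "beta n V k = (\<Sum>m\<le>k. (-1) ^ m * real ((n - m) choose (k - m)) * theta n V m)"

definition cong_2pi :: "real \<Rightarrow> real \<Rightarrow> bool" where
  "cong_2pi a b \<longleftrightarrow> (\<exists>z::int. a - b = 2 * pi * of_int z)"

end

theory Submission
  imports Defs
begin

text \<open>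
  U(1)-invariance makes H(t), and hence V, block diagonal with respect to the weight spaces.
  On the weight-m block, Liouville's formula for the Dyson equation gives
  det V_m = exp (-i \<integral>_0^T tr (\<Pi>_m H(t)) dt), so \<theta>_m is, modulo 2\<pi>, minus the time integral
  of the (real) diagonal entries of H summed over the basis states of weight m.

  For a function f on basis states, the alternating combination
  \<Sum>_m (-1)^m C(n-m,k-m) \<Sum>_{|x|=m} f(x) defining \<beta>_k equals \<Sum>_{|K|=k} \<Sum>_{x\<subseteq>K} (-1)^|x| f(x),
  a k-th finite difference. It vanishes on the diagonal of every operator acting on fewer than
  k qubits, because flipping a bit of K outside the support is a sign-reversing involution,
  and on the diagonal of Z_S with |S| = k it gives 2^k [K = S]. Hence only the k-body Z-terms
  contribute, each with weight 2^k.
\<close>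

section \<open>Piecewise continuous functions\<close>

lemma integrable_on_Icc_if_continuous_on_Ioo_with_limits:
  fixes f :: "real \<Rightarrow> 'a::banach"
  assumes ab: "a < b" and cont: "continuous_on {a<..<b} f"
    and la: "(f \<longlongrightarrow> la) (at_right a)" and lb: "(f \<longlongrightarrow> lb) (at_left b)"
  shows "f integrable_on {a..b}"
proof -
  define g where "g t = (if t = a then la else if t = b then lb else f t)" for t
  have "eventually (\<lambda>t. t \<in> {a<..<b}) (at_right a)"
    using ab by (simp add: eventually_at_right_field) (metis)
  then have "eventually (\<lambda>t. f t = g t) (at_right a)"
    by eventually_elim (auto simp: g_def)
  then have ga: "(g \<longlongrightarrow> g a) (at_right a)"
    using la by (simp add: Lim_transform_eventually g_def[of a])
  have "eventually (\<lambda>t. t \<in> {a<..<b}) (at_left b)"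
    using ab by (simp add: eventually_at_left_field) (metis)
  then have "eventually (\<lambda>t. f t = g t) (at_left b)"
    by eventually_elim (auto simp: g_def)
  then have gb: "(g \<longlongrightarrow> g b) (at_left b)"
    using lb ab by (simp add: Lim_transform_eventually g_def[of b])
  have gx: "(g \<longlongrightarrow> g x) (at x)" if x: "a < x" "x < b" for x
  proof -
    have "isCont f x"
      using cont x continuous_on_eq_continuous_at[of "{a<..<b}" f] by auto
    moreover have "eventually (\<lambda>t. t \<in> {a<..<b}) (at x)"
      using x by (intro eventually_at_in_open') auto
    then have "eventually (\<lambda>t. f t = g t) (at x)"
      by eventually_elim (auto simp: g_def)
    ultimately show ?thesis
      using x by (simp add: isCont_def Lim_transform_eventually g_def[of x])
  qed
  have "continuous_on {a..b} g"
    using ab ga gb gx by (intro continuous_on_IccI)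
  then have "g integrable_on {a..b}"
    by (rule integrable_continuous_interval)
  then show ?thesis
    by (rule integrable_spike_finite[where S="{a,b}", rotated 2]) (auto simp: g_def)
qed

lemma integrable_on_Icc_if_continuous_off_finite:
  fixes f :: "real \<Rightarrow> 'a::banach"
  assumes "finite D" and "a \<le> b" and "continuous_on ({a<..<b} - D) f"
    and "\<And>t. t \<in> {a<..b} \<Longrightarrow> \<exists>l. (f \<longlongrightarrow> l) (at_left t)"
    and "\<And>t. t \<in> {a..<b} \<Longrightarrow> \<exists>l. (f \<longlongrightarrow> l) (at_right t)"
  shows "f integrable_on {a..b}"
  using assms
proof (induction D arbitrary: a b rule: finite_induct)
  case empty
  show ?case
  proof (cases "a = b")
    case True
    then show ?thesis by (metis integrable_on_refl interval_cbox)
  next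
    case False
    with empty.prems have "a < b" by simp
    moreover obtain la lb where "(f \<longlongrightarrow> la) (at_right a)" "(f \<longlongrightarrow> lb) (at_left b)"
      using empty.prems \<open>a < b\<close> by fastforce
    ultimately show ?thesis
      using empty.prems integrable_on_Icc_if_continuous_on_Ioo_with_limits by auto
  qed
next
  case (insert d D)
  show ?case
  proof (cases "d \<in> {a<..<b}")
    case True
    have "f integrable_on {a..d}" "f integrable_on {d..b}"
      using True insert.prems
      by (auto intro!: insert.IH elim!: continuous_on_subset)
    then show ?thesis
      using True Henstock_Kurzweil_Integration.integrable_combine[where a=a and c=d and b=b and f=f] by auto
  next
    case False
    then have "{a<..<b} - insert d D = {a<..<b} - D" by auto
    then show ?thesis using insert.IH insert.prems by auto
  qed
qed

lemma piecewise_cont_integrable_on: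
  fixes f :: "real \<Rightarrow> 'a::banach"
  assumes "piecewise_cont T f" and "0 \<le> T"
  shows "f integrable_on {0..T}"
proof -
  obtain D where "finite D" "continuous_on ({0..T} - D) f"
    using assms(1) unfolding piecewise_cont_def by blast
  with assms show ?thesis
    unfolding piecewise_cont_def
    by (intro integrable_on_Icc_if_continuous_off_finite[of D])
       (auto elim: continuous_on_subset)
qed

lemma piecewise_cont_obtain_common_continuity_set:
  assumes "finite I" and "\<And>i. i \<in> I \<Longrightarrow> piecewise_cont T (f i)"
  obtains D where "finite D" and "\<And>i. i \<in> I \<Longrightarrow> continuous_on ({0..T} - D) (f i)"
proof -
  have "\<forall>i\<in>I. \<exists>D. finite D \<and> continuous_on ({0..T} - D) (f i)"
    using assms(2) unfolding piecewise_cont_def by blast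
  then obtain D where D: "\<And>i. i \<in> I \<Longrightarrow> finite (D i) \<and> continuous_on ({0..T} - D i) (f i)"
    by metis
  show thesis
  proof (rule that[of "\<Union>i\<in>I. D i"])
    show "finite (\<Union>i\<in>I. D i)" using assms(1) D by blast
  next
    fix i assume "i \<in> I"
    then show "continuous_on ({0..T} - (\<Union>i\<in>I. D i)) (f i)"
      using D by (blast intro: continuous_on_subset)
  qed
qed

section \<open>Liouville's formula\<close>

lemma det_mat_Leibniz:
  "det (mat d d (\<lambda>(i,j). X i j)) =
     (\<Sum>p\<in>{p. p permutes {..<d}}. signof p * (\<Prod>i<d. X i (p i)))"
proof -
  have "det (mat d d (\<lambda>(i,j). X i j)) =
     (\<Sum>p\<in>{p. p permutes {0..<d}}. signof p * (\<Prod>i=0..<d. mat d d (\<lambda>(i,j). X i j) $$ (i, p i)))"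
    by (rule det_def') simp
  also have "\<dots> = (\<Sum>p\<in>{p. p permutes {..<d}}. signof p * (\<Prod>i<d. X i (p i)))"
  proof (rule sum.cong)
    fix p assume "p \<in> {p. p permutes {..<d}}"
    then have "\<And>i. i < d \<Longrightarrow> p i < d" using permutes_in_image[of p "{..<d}"] by auto
    then show "signof p * (\<Prod>i=0..<d. mat d d (\<lambda>(i,j). X i j) $$ (i, p i)) =
        signof p * (\<Prod>i<d. X i (p i))"
      by (auto simp: atLeast0LessThan intro!: prod.cong)
  qed (simp add: atLeast0LessThan)
  finally show ?thesis .
qed

lemma det_mat_replace_row_Leibniz:
  fixes X :: "nat \<Rightarrow> nat \<Rightarrow> 'a::comm_ring_1"
  assumes "i < d"
  shows "det (mat d d (\<lambda>(r,c). if r = i then Y c else X r c)) =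
     (\<Sum>p\<in>{p. p permutes {..<d}}. signof p * (Y (p i) * (\<Prod>j\<in>{..<d}-{i}. X j (p j))))"
proof -
  have "(\<Prod>r<d. if r = i then Y (p r) else X r (p r)) = Y (p i) * (\<Prod>j\<in>{..<d}-{i}. X j (p j))" for p
    using assms by (subst prod.remove[of _ i]) (auto intro!: prod.cong)
  then show ?thesis
    unfolding det_mat_Leibniz by (simp add: if_distrib)
qed

lemma det_mat_replace_row:
  fixes X :: "nat \<Rightarrow> nat \<Rightarrow> 'a::comm_ring_1"
  assumes i: "i < d" and l: "l < d"
  shows "det (mat d d (\<lambda>(r,c). if r = i then X l c else X r c)) =
           (if l = i then det (mat d d (\<lambda>(r,c). X r c)) else 0)"
proof (cases "l = i")
  case True
  then have "(\<lambda>(r,c). if r = i then X l c else X r c) = (\<lambda>(r,c). X r c)"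
    by (auto simp: fun_eq_iff)
  then show ?thesis using True by simp
next
  case False
  let ?M = "mat d d (\<lambda>(r,c). if r = i then X l c else X r c)"
  have "row ?M i = row ?M l"
    using i l False by (auto intro!: eq_vecI)
  then have "det ?M = 0"
    using i l False by (intro det_identical_rows[of _ d i l]) auto
  then show ?thesis using False by simp
qed

lemma det_mat_replace_row_lincomb:
  fixes X :: "nat \<Rightarrow> nat \<Rightarrow> 'a::comm_ring_1"
  assumes i: "i < d"
  shows "det (mat d d (\<lambda>(r,c). if r = i then (\<Sum>l<d. B l * X l c) else X r c))
        = B i * det (mat d d (\<lambda>(r,c). X r c))"
proof -
  let ?Pm = "{p. p permutes {..<d}}"
  have "det (mat d d (\<lambda>(r,c). if r = i then (\<Sum>l<d. B l * X l c) else X r c))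
     = (\<Sum>l<d. B l * (\<Sum>p\<in>?Pm. signof p * (X l (p i) * (\<Prod>j\<in>{..<d}-{i}. X j (p j)))))"
    by (simp add: det_mat_replace_row_Leibniz[OF i] sum_distrib_left sum_distrib_right
        sum.swap[of _ ?Pm] mult_ac)
  also have "\<dots> = (\<Sum>l<d. B l * det (mat d d (\<lambda>(r,c). if r = i then X l c else X r c)))"
    by (simp add: det_mat_replace_row_Leibniz[OF i])
  also have "\<dots> = B i * det (mat d d (\<lambda>(r,c). X r c))"
    using i by (simp add: det_mat_replace_row[OF i] if_distrib sum.delta cong: if_cong)
  finally show ?thesis .
qed

lemma has_derivative_det_mat:
  fixes W :: "real \<Rightarrow> nat \<Rightarrow> nat \<Rightarrow> complex"
  assumes "\<And>i j. i < d \<Longrightarrow> j < d \<Longrightarrow> ((\<lambda>s. W s i j) has_derivative (\<lambda>h. of_real h * W' i j)) (at t)"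
  shows "((\<lambda>s. det (mat d d (\<lambda>(i,j). W s i j))) has_derivative
     (\<lambda>h. of_real h * (\<Sum>i<d. det (mat d d (\<lambda>(r,c). if r = i then W' i c else W t r c))))) (at t)"
proof -
  let ?Pm = "{p. p permutes {..<d}}"
  have "p i < d" if "p \<in> ?Pm" "i < d" for p i
    using permutes_in_image[of p "{..<d}" i] that by auto
  then have "((\<lambda>s. \<Sum>p\<in>?Pm. signof p * (\<Prod>i<d. W s i (p i))) has_derivative
     (\<lambda>h. \<Sum>p\<in>?Pm. signof p *
        (\<Sum>i<d. (of_real h * W' i (p i)) * (\<Prod>j\<in>{..<d}-{i}. W t j (p j))))) (at t)"
    by (intro has_derivative_sum has_derivative_mult_right has_derivative_prod assms) auto
  moreover have "(\<Sum>p\<in>?Pm. signof p *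
        (\<Sum>i<d. (of_real h * W' i (p i)) * (\<Prod>j\<in>{..<d}-{i}. W t j (p j))))
      = of_real h * (\<Sum>i<d. det (mat d d (\<lambda>(r,c). if r = i then W' i c else W t r c)))" for h
    by (simp add: det_mat_replace_row_Leibniz sum_distrib_left sum.swap[of _ ?Pm] mult_ac)
  ultimately show ?thesis
    unfolding det_mat_Leibniz by simp
qed

lemma has_vector_derivative_integral_upper:
  fixes f :: "real \<Rightarrow> 'a::banach"
  assumes f: "f integrable_on {a..b}" and t: "t \<in> {a<..<b}" and "isCont f t"
  shows "((\<lambda>u. integral {a..u} f) has_vector_derivative f t) (at t)"
proof -
  have "((\<lambda>u. integral {a..u} f) has_vector_derivative f t) (at t within {a..b} - {})"
    by (rule integral_has_vector_derivative_continuous_at[OF f])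
      (use t \<open>isCont f t\<close> continuous_at_imp_continuous_within in auto)
  then show ?thesis
    using t at_within_Icc_at[of a t b] by simp
qed

lemma has_vector_derivative_if_integral_equation:
  fixes w F :: "real \<Rightarrow> 'a::banach"
  assumes F: "F integrable_on {a..b}" and w: "\<And>s. s \<in> {a..b} \<Longrightarrow> w s = integral {a..s} F + c"
    and t: "t \<in> {a<..<b}" and "isCont F t"
  shows "(w has_vector_derivative F t) (at t)"
proof (rule has_vector_derivative_transform_within_open[where S="{a<..<b}"])
  show "((\<lambda>s. integral {a..s} F + c) has_vector_derivative F t) (at t)"
    unfolding has_vector_derivative_add_const
    using F t \<open>isCont F t\<close> by (rule has_vector_derivative_integral_upper)
qed (use t w in auto)

lemma continuous_on_if_integral_equation:
  fixes w F :: "real \<Rightarrow> 'a::banach"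
  assumes "F integrable_on {a..b}" and "\<And>s. s \<in> {a..b} \<Longrightarrow> w s = integral {a..s} F + c"
  shows "continuous_on {a..b} w"
proof (rule continuous_on_eq)
  show "continuous_on {a..b} (\<lambda>s. integral {a..s} F + c)"
    using assms(1) by (intro continuous_intros indefinite_integral_continuous_1)
qed (use assms(2) in auto)

lemma exp_integral_if_has_derivative_linear:
  fixes g c :: "real \<Rightarrow> complex"
  assumes T: "0 \<le> T" and D: "finite D"
    and g_cont: "continuous_on {0..T} g" and g0: "g 0 = 1"
    and c_int: "c integrable_on {0..T}" and c_cont: "\<And>t. t \<in> {0<..<T} - D \<Longrightarrow> isCont c t"
    and g_deriv: "\<And>t. t \<in> {0<..<T} - D \<Longrightarrow> (g has_derivative (\<lambda>h. of_real h * (c t * g t))) (at t)"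
  shows "g T = exp (integral {0..T} c)"
proof -
  define G where "G t = integral {0..t} c" for t
  define f where "f t = g t * exp (- G t)" for t
  have f_deriv: "(f has_derivative (\<lambda>h. 0)) (at t within {0..T})" if "t \<in> {0..T} - (D \<union> {0,T})" for t
  proof -
    have t: "t \<in> {0<..<T} - D" using that by auto
    have "(G has_vector_derivative c t) (at t)"
      unfolding G_def by (rule has_vector_derivative_integral_upper[OF c_int _ c_cont[OF t]]) (use t in auto)
    then have "((\<lambda>s. - G s) has_derivative (\<lambda>h. - (of_real h * c t))) (at t)"
      by (intro has_derivative_minus) (simp add: has_vector_derivative_def scaleR_conv_of_real)
    from has_derivative_compose[OF this DERIV_exp[of "- G t", unfolded has_field_derivative_def]]
    have "((\<lambda>s. exp (- G s)) has_derivative (\<lambda>h. exp (- G t) * - (of_real h * c t))) (at t)"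
      by simp
    from has_derivative_mult[OF g_deriv[OF t] this]
    have "(f has_derivative (\<lambda>h. 0)) (at t)"
      unfolding f_def by (rule has_derivative_eq_rhs) (simp add: fun_eq_iff algebra_simps)
    then show ?thesis by (rule has_derivative_at_withinI)
  qed
  have f_cont: "continuous_on {0..T} f"
    unfolding f_def G_def by (intro continuous_intros g_cont indefinite_integral_continuous_1 c_int)
  have "f 0 = 1"
    by (simp add: f_def G_def g0)
  have "f T = 1"
    by (rule has_derivative_zero_unique_strong_interval[of "D \<union> {0,T}" 0 T f, OF _ f_cont \<open>f 0 = 1\<close> f_deriv])
      (use D T in auto)
  then show ?thesis
    by (simp add: f_def G_def exp_minus field_simps)
qed

lemma det_mat_Liouville:
  fixes A W :: "real \<Rightarrow> nat \<Rightarrow> nat \<Rightarrow> complex"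
  assumes T: "0 \<le> T" and D: "finite D"
    and W_eq: "\<And>i j t. i < d \<Longrightarrow> j < d \<Longrightarrow> t \<in> {0..T} \<Longrightarrow>
      ((\<lambda>s. \<Sum>l<d. A s i l * W s l j) has_integral (W t i j - (if i = j then 1 else 0))) {0..t}"
    and A_cont: "\<And>i j. i < d \<Longrightarrow> j < d \<Longrightarrow> continuous_on ({0..T} - D) (\<lambda>s. A s i j)"
    and tr_int: "(\<lambda>s. \<Sum>i<d. A s i i) integrable_on {0..T}"
  shows "det (mat d d (\<lambda>(i,j). W T i j)) = exp (integral {0..T} (\<lambda>s. \<Sum>i<d. A s i i))"
proof -
  define F where "F i j s = (\<Sum>l<d. A s i l * W s l j)" for i j s
  have F_int: "F i j integrable_on {0..T}" if "i < d" "j < d" for i j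
    using W_eq[OF that, of T] T unfolding F_def integrable_on_def by auto
  have W_integral: "W t i j = integral {0..t} (F i j) + (if i = j then 1 else 0)"
    if "i < d" "j < d" "t \<in> {0..T}" for i j t
    using integral_unique[OF W_eq[OF that]] unfolding F_def by (auto simp: algebra_simps)
  have W_cont: "continuous_on {0..T} (\<lambda>t. W t i j)" if "i < d" "j < d" for i j
    using F_int[OF that] W_integral[OF that] by (rule continuous_on_if_integral_equation)
  have A_isCont: "isCont (\<lambda>s. A s i j) t" if "t \<in> {0<..<T} - D" "i < d" "j < d" for t i j
  proof -
    have "open ({0<..<T} - D)" using D by (intro open_Diff finite_imp_closed) auto
    moreover have "continuous_on ({0<..<T} - D) (\<lambda>s. A s i j)"
      using A_cont[OF that(2,3)] by (rule continuous_on_subset) auto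
    ultimately show ?thesis using that(1) continuous_on_eq_continuous_at by blast
  qed
  have W_deriv: "((\<lambda>s. W s i j) has_derivative (\<lambda>h. of_real h * F i j t)) (at t)"
    if t: "t \<in> {0<..<T} - D" and "i < d" "j < d" for t i j
  proof -
    have "isCont (\<lambda>s. W s l j) t" if "l < d" for l
      using continuous_on_interior[OF W_cont[OF that \<open>j < d\<close>]] t by auto
    then have "isCont (F i j) t"
      unfolding F_def using A_isCont[OF t \<open>i < d\<close>] by (intro isCont_sum continuous_intros) auto
    then have "((\<lambda>s. W s i j) has_vector_derivative F i j t) (at t)"
      using F_int[OF that(2,3)] W_integral[OF that(2,3)] t
      by (intro has_vector_derivative_if_integral_equation) auto
    then show ?thesis
      by (simp add: has_vector_derivative_def scaleR_conv_of_real)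
  qed
  show ?thesis
  proof (rule exp_integral_if_has_derivative_linear[where g="\<lambda>t. det (mat d d (\<lambda>(i,j). W t i j))", OF T D])
    have "p i < d" if "p permutes {..<d}" "i < d" for p i
      using permutes_in_image[OF that(1)] that(2) by auto
    then show "continuous_on {0..T} (\<lambda>t. det (mat d d (\<lambda>(i,j). W t i j)))"
      unfolding det_mat_Leibniz
      by (intro continuous_on_sum continuous_on_mult_left continuous_on_prod W_cont) auto
    have "mat d d (\<lambda>(i,j). W 0 i j) = 1\<^sub>m d"
      using W_integral T by (intro eq_matI) auto
    then show "det (mat d d (\<lambda>(i,j). W 0 i j)) = 1"
      by simp
    show "isCont (\<lambda>s. \<Sum>i<d. A s i i) t" if "t \<in> {0<..<T} - D" for t
      using A_isCont[OF that] by (intro isCont_sum) auto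
    fix t assume t: "t \<in> {0<..<T} - D"
    have "(\<Sum>i<d. det (mat d d (\<lambda>(r,c). if r = i then F i c t else W t r c)))
        = (\<Sum>i<d. A t i i) * det (mat d d (\<lambda>(i,j). W t i j))"
      unfolding F_def by (simp add: det_mat_replace_row_lincomb sum_distrib_right)
    with has_derivative_det_mat[of d W "\<lambda>i j. F i j t" t] W_deriv[OF t]
    show "((\<lambda>t. det (mat d d (\<lambda>(i,j). W t i j))) has_derivative
        (\<lambda>h. of_real h * ((\<Sum>i<d. A t i i) * det (mat d d (\<lambda>(i,j). W t i j))))) (at t)"
      by simp
  qed (fact tr_int)
qed

section \<open>Basis states as sets of qubits\<close>

definition bit_set :: "nat \<Rightarrow> nat \<Rightarrow> nat set" where
  "bit_set n x = {j. j < n \<and> bit x j}"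

lemma popcount_eq_card_bit_set: "popcount n x = card (bit_set n x)"
  by (simp add: popcount_def bit_set_def)

lemma finite_bit_set[simp]: "finite (bit_set n x)" by (simp add: bit_set_def)
lemma bit_set_subset: "bit_set n x \<subseteq> {..<n}" by (auto simp: bit_set_def)

lemma less_power2_iff_bits: "(x::nat) < 2^n \<longleftrightarrow> (\<forall>i. bit x i \<longrightarrow> i < n)"
proof -
  have "x < 2^n \<longleftrightarrow> take_bit n x = x" by (simp add: take_bit_nat_eq_self_iff)
  also have "\<dots> \<longleftrightarrow> (\<forall>i. bit (take_bit n x) i = bit x i)" by (simp add: bit_eq_iff)
  also have "\<dots> \<longleftrightarrow> (\<forall>i. bit x i \<longrightarrow> i < n)" by (auto simp: bit_take_bit_iff)
  finally show ?thesis .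
qed

lemma inj_on_bit_set: "inj_on (bit_set n) {..<2^n}"
proof (rule inj_onI)
  fix x y assume "x \<in> {..<2^n}" "y \<in> {..<2^n}" and eq: "bit_set n x = bit_set n y"
  then have "\<forall>i. bit x i \<longrightarrow> i < n" "\<forall>i. bit y i \<longrightarrow> i < n"
    by (simp_all add: less_power2_iff_bits)
  with eq show "x = y"
    by (intro bit_eqI) (auto simp: bit_set_def)
qed

lemma bit_set_image_eq_Pow: "bit_set n ` {..<2^n} = Pow {..<n}"
proof -
  have "card (bit_set n ` {..<2^n}) = card (Pow {..<n})"
    using card_image[OF inj_on_bit_set] by (simp add: card_Pow)
  then show ?thesis
    using bit_set_subset by (intro card_subset_eq) auto
qed

lemma card_bit_set_subset_eq:
  assumes S: "S \<subseteq> {..<n}"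
  shows "card {x. x < 2^n \<and> bit_set n x \<subseteq> S} = 2 ^ card S"
proof -
  let ?A = "{x. x < 2^n \<and> bit_set n x \<subseteq> S}"
  have inj: "inj_on (bit_set n) ?A"
    by (rule inj_on_subset[OF inj_on_bit_set]) auto
  have "bit_set n ` ?A = Pow S"
  proof
    show "bit_set n ` ?A \<subseteq> Pow S" by auto
    show "Pow S \<subseteq> bit_set n ` ?A"
    proof
      fix Y assume "Y \<in> Pow S"
      with S have "Y \<in> bit_set n ` {..<2^n}" by (auto simp: bit_set_image_eq_Pow)
      then show "Y \<in> bit_set n ` ?A" using \<open>Y \<in> Pow S\<close> by auto
    qed
  qed
  then have "card ?A = card (Pow S)" using card_image[OF inj] by simp
  also have "\<dots> = 2 ^ card S" using finite_subset[OF S] by (simp add: card_Pow)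
  finally show ?thesis .
qed

lemma flip_bit_less_power2:
  assumes "j < n" "(x::nat) < 2^n" shows "flip_bit j x < 2^n"
  using assms unfolding less_power2_iff_bits by (auto simp: bit_flip_bit_iff)

lemma flip_bit_flip_bit: "flip_bit j (flip_bit j (x::nat)) = x"
  by (rule bit_eqI) (auto simp: bit_flip_bit_iff)

lemma bit_set_flip_bit:
  assumes "j < n"
  shows "bit_set n (flip_bit j x) = (if j \<in> bit_set n x then bit_set n x - {j} else insert j (bit_set n x))"
  using assms by (auto simp: bit_set_def bit_flip_bit_iff)

lemma neg_one_power_card_bit_set_flip_bit:
  assumes "j < n"
  shows "(-1::'a::comm_ring_1) ^ card (bit_set n (flip_bit j x)) = - ((-1) ^ card (bit_set n x))"
proof (cases "j \<in> bit_set n x")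
  case True
  then have c: "card (bit_set n x) = Suc (card (bit_set n x - {j}))"
    by (metis card_Suc_Diff1 finite_bit_set)
  have "bit_set n (flip_bit j x) = bit_set n x - {j}" using True assms by (simp add: bit_set_flip_bit)
  then have "(-1::'a) ^ card (bit_set n x) = - ((-1) ^ card (bit_set n (flip_bit j x)))"
    by (subst c) simp
  then show ?thesis by simp
next
  case False
  then show ?thesis using assms by (simp add: bit_set_flip_bit)
qed

lemma signed_sum_eq_0_if_flip_bit_invariant:
  fixes f :: "nat \<Rightarrow> 'a::field_char_0"
  assumes j: "j \<in> K" and K: "K \<subseteq> {..<n}"
    and f: "\<And>x. x < 2^n \<Longrightarrow> f (flip_bit j x) = f x"
  shows "(\<Sum>x\<in>{x. x < 2^n \<and> bit_set n x \<subseteq> K}. (-1)^card (bit_set n x) * f x) = 0"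
proof -
  let ?A = "{x. x < 2^n \<and> bit_set n x \<subseteq> K}"
  let ?g = "\<lambda>x. (-1::'a)^card (bit_set n x) * f x"
  have jn: "j < n" using j K by auto
  have mapA: "flip_bit j x \<in> ?A" if "x \<in> ?A" for x
    using that jn j flip_bit_less_power2[OF jn] by (auto simp: bit_set_flip_bit)
  have bij: "bij_betw (flip_bit j) ?A ?A"
    by (rule bij_betw_byWitness[where f'="flip_bit j"]) (use mapA flip_bit_flip_bit in auto)
  have "sum ?g ?A = sum (?g \<circ> flip_bit j) ?A"
    using sum.reindex_bij_betw[OF bij, of ?g] by (simp add: comp_def)
  also have "\<dots> = sum (\<lambda>x. - ?g x) ?A"
    by (rule sum.cong) (simp_all add: f neg_one_power_card_bit_set_flip_bit[OF jn, where 'a='a])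
  also have "\<dots> = - sum ?g ?A" by (simp add: sum_negf)
  finally show ?thesis by simp
qed

lemma card_supersets_eq:
  assumes U: "finite U" and X: "X \<subseteq> U"
  shows "card {K. K \<subseteq> U \<and> card K = k \<and> X \<subseteq> K} =
         (if card X \<le> k then (card U - card X) choose (k - card X) else 0)"
proof (cases "card X \<le> k")
  case False
  have E: "{K. K \<subseteq> U \<and> card K = k \<and> X \<subseteq> K} = {}"
  proof (rule ccontr)
    assume "{K. K \<subseteq> U \<and> card K = k \<and> X \<subseteq> K} \<noteq> {}"
    then obtain K where "K \<subseteq> U" "card K = k" "X \<subseteq> K" by auto
    then have "card X \<le> k" using card_mono finite_subset U by metis
    then show False using False by simp
  qed
  show ?thesis unfolding E using False by simp
next
  case True
  have fX: "finite X" using finite_subset[OF X U] .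
  have "bij_betw (\<lambda>K. K - X) {K. K \<subseteq> U \<and> card K = k \<and> X \<subseteq> K} {L. L \<subseteq> U - X \<and> card L = k - card X}"
  proof (rule bij_betw_byWitness[where f'="\<lambda>L. L \<union> X"])
    show "\<forall>a\<in>{K. K \<subseteq> U \<and> card K = k \<and> X \<subseteq> K}. a - X \<union> X = a" by auto
    show "\<forall>a\<in>{L. L \<subseteq> U - X \<and> card L = k - card X}. a \<union> X - X = a" by auto
    show "(\<lambda>K. K - X) ` {K. K \<subseteq> U \<and> card K = k \<and> X \<subseteq> K} \<subseteq> {L. L \<subseteq> U - X \<and> card L = k - card X}"
    proof
      fix L assume "L \<in> (\<lambda>K. K - X) ` {K. K \<subseteq> U \<and> card K = k \<and> X \<subseteq> K}"
      then obtain K where K: "K \<subseteq> U" "card K = k" "X \<subseteq> K" "L = K - X" by auto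
      have "card (K - X) = card K - card X" using K fX by (simp add: card_Diff_subset)
      then show "L \<in> {L. L \<subseteq> U - X \<and> card L = k - card X}" using K by auto
    qed
    show "(\<lambda>L. L \<union> X) ` {L. L \<subseteq> U - X \<and> card L = k - card X} \<subseteq> {K. K \<subseteq> U \<and> card K = k \<and> X \<subseteq> K}"
    proof
      fix K assume "K \<in> (\<lambda>L. L \<union> X) ` {L. L \<subseteq> U - X \<and> card L = k - card X}"
      then obtain L where L: "L \<subseteq> U - X" "card L = k - card X" "K = L \<union> X" by auto
      have fL: "finite L" using finite_subset[OF L(1)] U by auto
      have "card (L \<union> X) = card L + card X" using L fL fX by (intro card_Un_disjoint) auto
      then show "K \<in> {K. K \<subseteq> U \<and> card K = k \<and> X \<subseteq> K}" using L X True by auto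
    qed
  qed
  then have "card {K. K \<subseteq> U \<and> card K = k \<and> X \<subseteq> K} = card {L. L \<subseteq> U - X \<and> card L = k - card X}"
    by (rule bij_betw_same_card)
  also have "\<dots> = card (U - X) choose (k - card X)" using U by (intro n_subsets) auto
  also have "card (U - X) = card U - card X" using X fX by (simp add: card_Diff_subset)
  finally show ?thesis using True by simp
qed

text \<open>A basis state of weight \<open>m \<le> k\<close> lies below exactly \<open>(n - m) choose (k - m)\<close> of the \<open>k\<close>-sets of qubits.\<close>
lemma alternating_weight_sum_eq:
  fixes F :: "nat \<Rightarrow> 'a::comm_ring_1"
  shows "(\<Sum>m\<le>k. (-1)^m * of_nat ((n-m) choose (k-m)) * (\<Sum>x\<in>weight_space n m. F x)) =
    (\<Sum>K\<in>{K. K \<subseteq> {..<n} \<and> card K = k}. \<Sum>x\<in>{x. x < 2^n \<and> bit_set n x \<subseteq> K}. (-1)^card (bit_set n x) * F x)"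
proof -
  let ?KS = "{K. K \<subseteq> {..<n} \<and> card K = k}"
  let ?w = "\<lambda>x. card (bit_set n x)"
  have "finite ?KS"
    by (rule finite_subset[of _ "Pow {..<n}"]) auto
  have regroup: "(\<Sum>m\<in>{m. m \<in> {..k} \<and> ?w x = m}. (-1)^m * of_nat ((n-m) choose (k-m)) * F x)
      = (\<Sum>K\<in>{K. K \<in> ?KS \<and> bit_set n x \<subseteq> K}. (-1)^?w x * F x)" for x
  proof -
    have "{K. K \<in> ?KS \<and> bit_set n x \<subseteq> K} = {K. K \<subseteq> {..<n} \<and> card K = k \<and> bit_set n x \<subseteq> K}"
      by auto
    then have "card {K. K \<in> ?KS \<and> bit_set n x \<subseteq> K}
        = (if ?w x \<le> k then (n - ?w x) choose (k - ?w x) else 0)"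
      using card_supersets_eq[of "{..<n}" "bit_set n x" k] bit_set_subset by simp
    moreover have "{m. m \<in> {..k} \<and> ?w x = m} = (if ?w x \<le> k then {?w x} else {})"
      by auto
    ultimately show ?thesis
      by (simp add: mult_ac)
  qed
  have "(\<Sum>m\<le>k. (-1)^m * of_nat ((n-m) choose (k-m)) * (\<Sum>x\<in>weight_space n m. F x))
      = (\<Sum>m\<in>{..k}. \<Sum>x\<in>{x. x \<in> {..<2^n} \<and> ?w x = m}. (-1)^m * of_nat ((n-m) choose (k-m)) * F x)"
    by (simp add: weight_space_def dimH_def popcount_eq_card_bit_set sum_distrib_left)
  also have "\<dots> = (\<Sum>x\<in>{..<2^n}. \<Sum>m\<in>{m. m \<in> {..k} \<and> ?w x = m}. (-1)^m * of_nat ((n-m) choose (k-m)) * F x)"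
    by (rule sum.swap_restrict) auto
  also have "\<dots> = (\<Sum>x\<in>{..<2^n}. \<Sum>K\<in>{K. K \<in> ?KS \<and> bit_set n x \<subseteq> K}. (-1)^?w x * F x)"
    by (simp only: regroup)
  also have "\<dots> = (\<Sum>K\<in>?KS. \<Sum>x\<in>{x. x \<in> {..<2^n} \<and> bit_set n x \<subseteq> K}. (-1)^?w x * F x)"
    by (rule sum.swap_restrict) (use \<open>finite ?KS\<close> in auto)
  finally show ?thesis
    by simp
qed

section \<open>Diagonals of local and U(1)-invariant operators\<close>

lemma acts_on_diag_eq:
  assumes "acts_on n S B" and "x < dimH n" "x' < dimH n" and "\<forall>j\<in>S. bit x j = bit x' j"
  shows "B $$ (x,x) = B $$ (x',x')"
  using acts_on_def[THEN iffD1, OF assms(1), THEN conjunct2, THEN conjunct2, THEN conjunct2,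
      rule_format, of x x x' x'] assms(2-4)
  by blast

lemma signed_diag_sum_eq_0_if_acts_on:
  fixes B :: "complex mat"
  assumes act: "acts_on n S B" and K: "K \<subseteq> {..<n}" "\<not> K \<subseteq> S"
  shows "(\<Sum>x\<in>{x. x < 2^n \<and> bit_set n x \<subseteq> K}. (-1)^card (bit_set n x) * B $$ (x,x)) = 0"
proof -
  obtain j where j: "j \<in> K" "j \<notin> S" using K(2) by auto
  then have "j < n" using K(1) by auto
  show ?thesis
  proof (rule signed_sum_eq_0_if_flip_bit_invariant[OF j(1) K(1)])
    fix x :: nat assume "x < 2^n"
    moreover have "flip_bit j x < 2^n"
      using \<open>j < n\<close> \<open>x < 2^n\<close> by (rule flip_bit_less_power2)
    moreover have "\<forall>i\<in>S. bit x i = bit (flip_bit j x) i"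
      using j(2) by (auto simp: bit_flip_bit_iff)
    ultimately show "B $$ (flip_bit j x, flip_bit j x) = B $$ (x,x)"
      using acts_on_diag_eq[OF act] unfolding dimH_def by metis
  qed
qed

definition Zprod_eigenvalue :: "nat set \<Rightarrow> nat \<Rightarrow> real" where
  "Zprod_eigenvalue S x = (\<Prod>j\<in>S. if bit x j then -1 else 1)"

lemma Zprod_diag:
  assumes "x < dimH n"
  shows "Zprod n S $$ (x,x) = of_real (Zprod_eigenvalue S x)"
  using assms unfolding Zprod_def Zprod_eigenvalue_def by (auto simp: of_real_prod intro!: prod.cong)

lemma signed_sum_Zprod_eigenvalue:
  assumes S: "S \<subseteq> {..<n}" and K: "K \<subseteq> {..<n}" "card K = card S"
  shows "(\<Sum>x\<in>{x. x < 2^n \<and> bit_set n x \<subseteq> K}. (-1)^card (bit_set n x) * Zprod_eigenvalue S x)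
      = (if K = S then 2 ^ card S else 0)"
proof (cases "K = S")
  case False
  have "finite S" using S finite_subset by blast
  then have "\<not> K \<subseteq> S" using card_subset_eq K(2) False by blast
  then obtain j where j: "j \<in> K" "j \<notin> S" by auto
  have "(\<Sum>x\<in>{x. x < 2^n \<and> bit_set n x \<subseteq> K}. (-1)^card (bit_set n x) * Zprod_eigenvalue S x) = 0"
  proof (rule signed_sum_eq_0_if_flip_bit_invariant[OF j(1) K(1)])
    show "Zprod_eigenvalue S (flip_bit j x) = Zprod_eigenvalue S x" for x
      unfolding Zprod_eigenvalue_def using j(2) by (intro prod.cong refl) (auto simp: bit_flip_bit_iff)
  qed
  then show ?thesis using False by simp
next
  case True
  have "Zprod_eigenvalue S x = (-1) ^ card (bit_set n x)" if "bit_set n x \<subseteq> S" for x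
  proof -
    have "S \<inter> {j. bit x j} = bit_set n x" using that S unfolding bit_set_def by auto
    then show ?thesis
      unfolding Zprod_eigenvalue_def using finite_subset[OF S] by (simp add: prod.If_cases)
  qed
  then have "(\<Sum>x\<in>{x. x < 2^n \<and> bit_set n x \<subseteq> S}. (-1)^card (bit_set n x) * Zprod_eigenvalue S x)
      = (\<Sum>x\<in>{x. x < 2^n \<and> bit_set n x \<subseteq> S}. 1)"
    by (intro sum.cong) (auto simp flip: power_mult_distrib)
  also have "\<dots> = 2 ^ card S" using card_bit_set_subset_eq[OF S] by simp
  finally show ?thesis using True by simp
qed

lemma index_mult_mat_sum:
  fixes A B :: "'a::comm_ring_1 mat"
  assumes "A \<in> carrier_mat N N" "B \<in> carrier_mat N N" "x < N" "y < N"
  shows "(A * B) $$ (x,y) = (\<Sum>z<N. A $$ (x,z) * B $$ (z,y))"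
  using assms by (simp add: scalar_prod_def atLeast0LessThan)

lemma Ztot_entry:
  assumes "x < dimH n" "y < dimH n"
  shows "Ztot n $$ (x,y) = (if x = y then of_nat n - 2 * of_nat (popcount n x) else 0)"
proof -
  have "(\<Sum>j<n. if bit x j then -1 else 1 :: complex) = (\<Sum>j<n. 1 - 2 * of_bool (bit x j))"
    by (intro sum.cong) auto
  also have "\<dots> = of_nat n - 2 * of_nat (popcount n x)"
    by (simp add: sum_subtractf sum_distrib_left[symmetric] popcount_def Collect_conj_eq lessThan_def)
  finally show ?thesis
    using assms by (cases "x = y") (simp_all add: Ztot_def Zop_def)
qed

text \<open>Commuting with the diagonal matrix \<open>Ztot n\<close>, whose eigenvalue \<open>n - 2 m\<close> determines the
  weight \<open>m\<close>, forces a U(1)-invariant operator to be block diagonal.\<close>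
lemma U1_invariant_entry_eq_0:
  fixes A :: "complex mat"
  assumes U: "U1_invariant n A" and A: "A \<in> carrier_mat (dimH n) (dimH n)"
    and x: "x < dimH n" and y: "y < dimH n" and xy: "popcount n x \<noteq> popcount n y"
  shows "A $$ (x,y) = 0"
proof -
  let ?z = "\<lambda>x. of_nat n - 2 * of_nat (popcount n x) :: complex"
  have Z: "Ztot n \<in> carrier_mat (dimH n) (dimH n)" by (simp add: Ztot_def)
  have "(A * Ztot n) $$ (x,y) = (\<Sum>z<dimH n. if z = y then A $$ (x,y) * ?z y else 0)"
    unfolding index_mult_mat_sum[OF A Z x y] by (intro sum.cong) (auto simp: Ztot_entry y)
  also have "\<dots> = A $$ (x,y) * ?z y"
    using y by simp
  finally have AZ: "(A * Ztot n) $$ (x,y) = A $$ (x,y) * ?z y" .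
  have "(Ztot n * A) $$ (x,y) = (\<Sum>z<dimH n. if z = x then ?z x * A $$ (x,y) else 0)"
    unfolding index_mult_mat_sum[OF Z A x y] by (intro sum.cong) (auto simp: Ztot_entry x)
  also have "\<dots> = ?z x * A $$ (x,y)"
    using x by simp
  finally have ZA: "(Ztot n * A) $$ (x,y) = ?z x * A $$ (x,y)" .
  have "A * Ztot n = Ztot n * A"
    using U unfolding U1_invariant_def .
  with AZ ZA have "A $$ (x,y) * ?z y = A $$ (x,y) * ?z x"
    by (metis mult.commute)
  moreover have "?z y \<noteq> ?z x"
    using xy by simp
  ultimately show ?thesis
    by simp
qed

lemma signed_diag_sum_eq_0_if_k_local:
  assumes "k_local n l A" and "K \<subseteq> {..<n}" and "l < card K"
  shows "(\<Sum>x\<in>{x. x < 2^n \<and> bit_set n x \<subseteq> K}. (-1)^card (bit_set n x) * A $$ (x,x)) = 0"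
proof -
  let ?X = "{x. x < 2^n \<and> bit_set n x \<subseteq> K}"
  obtain ts :: "(nat set \<times> complex mat) list" where
    ts: "\<forall>(S,B)\<in>set ts. card S \<le> l \<and> acts_on n S B"
    and A: "\<forall>x<dimH n. \<forall>y<dimH n. A $$ (x,y) = (\<Sum>p\<leftarrow>ts. snd p $$ (x,y))"
    using assms(1) unfolding k_local_def by blast
  have term_0: "(\<Sum>x\<in>?X. (-1)^card (bit_set n x) * snd p $$ (x,x)) = 0" if "p \<in> set ts" for p
  proof -
    obtain S B where p: "p = (S,B)" "card S \<le> l" "acts_on n S B"
      using ts \<open>p \<in> set ts\<close> by (cases p) auto
    have "finite S"
      using p(3) unfolding acts_on_def by (auto intro: finite_subset)
    have "\<not> K \<subseteq> S"
    proof
      assume "K \<subseteq> S"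
      with \<open>finite S\<close> have "card K \<le> card S" by (rule card_mono)
      with p(2) assms(3) show False by simp
    qed
    then show ?thesis
      using signed_diag_sum_eq_0_if_acts_on[OF p(3) assms(2)] p(1) by simp
  qed
  have "(\<Sum>x\<in>?X. (-1)^card (bit_set n x) * A $$ (x,x))
      = (\<Sum>x\<in>?X. (-1)^card (bit_set n x) * (\<Sum>p\<leftarrow>ts. snd p $$ (x,x)))"
    using A by (intro sum.cong) (auto simp: dimH_def)
  also have "\<dots> = (\<Sum>p\<leftarrow>ts. \<Sum>x\<in>?X. (-1)^card (bit_set n x) * snd p $$ (x,x))"
    by (induction ts) (simp_all add: distrib_left sum.distrib)
  also have "\<dots> = (\<Sum>p\<leftarrow>ts. 0)"
    using term_0 by (intro arg_cong[where f=sum_list] map_cong) auto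
  finally show ?thesis
    by simp
qed

lemma alternating_weight_sum_Re_diag_eq_0_if_k_local:
  assumes "k_local n l A" and "l < k"
  shows "(\<Sum>m\<le>k. (-1)^m * real ((n-m) choose (k-m)) * (\<Sum>x\<in>weight_space n m. Re (A $$ (x,x)))) = 0"
proof -
  have "(\<Sum>x\<in>{x. x < 2^n \<and> bit_set n x \<subseteq> K}. (-1)^card (bit_set n x) * Re (A $$ (x,x))) = 0"
    if K: "K \<subseteq> {..<n}" "card K = k" for K
  proof -
    have "(\<Sum>x\<in>{x. x < 2^n \<and> bit_set n x \<subseteq> K}. (-1)^card (bit_set n x) * Re (A $$ (x,x)))
        = Re (\<Sum>x\<in>{x. x < 2^n \<and> bit_set n x \<subseteq> K}. (-1)^card (bit_set n x) * A $$ (x,x))"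
      by (simp add: Re_sum)
    also have "\<dots> = 0"
      using signed_diag_sum_eq_0_if_k_local[OF assms(1) K(1)] K(2) assms(2) by simp
    finally show ?thesis .
  qed
  then show ?thesis
    unfolding alternating_weight_sum_eq[where F="\<lambda>x. Re (A $$ (x,x))"] by simp
qed

lemma alternating_weight_sum_Zprod_eigenvalue:
  assumes "S \<subseteq> {..<n}" and "card S = k"
  shows "(\<Sum>m\<le>k. (-1)^m * real ((n-m) choose (k-m)) * (\<Sum>x\<in>weight_space n m. Zprod_eigenvalue S x)) = 2^k"
proof -
  let ?KS = "{K. K \<subseteq> {..<n} \<and> card K = k}"
  have "finite ?KS"
    by (rule finite_subset[of _ "Pow {..<n}"]) auto
  have "(\<Sum>K\<in>?KS. \<Sum>x\<in>{x. x < 2^n \<and> bit_set n x \<subseteq> K}. (-1)^card (bit_set n x) * Zprod_eigenvalue S x)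
      = (\<Sum>K\<in>?KS. if K = S then 2^k else 0)"
    using assms by (intro sum.cong refl) (simp add: signed_sum_Zprod_eigenvalue)
  also have "\<dots> = 2^k"
    using \<open>finite ?KS\<close> assms by (simp add: sum.delta')
  finally show ?thesis
    unfolding alternating_weight_sum_eq[where F="Zprod_eigenvalue S"] .
qed

section \<open>Weight blocks of the time-ordered exponential\<close>

lemma bij_betw_pick:
  assumes "finite B"
  shows "bij_betw (pick B) {..<card B} B"
proof -
  have inj: "inj_on (pick B) {..<card B}"
  proof (rule inj_onI)
    fix i j assume "i \<in> {..<card B}" "j \<in> {..<card B}" "pick B i = pick B j"
    then show "i = j" using pick_mono_le[of i B j] pick_mono_le[of j B i]
      by (metis lessThan_iff nat_neq_iff order.irrefl)
  qed
  have "pick B ` {..<card B} \<subseteq> B" using pick_in_set_le by auto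
  moreover have "card (pick B ` {..<card B}) = card B" using card_image[OF inj] by simp
  ultimately have "pick B ` {..<card B} = B" using assms by (intro card_subset_eq) auto
  then show ?thesis using inj unfolding bij_betw_def by simp
qed

lemma time_ordered_exp_block_integral_equation:
  assumes V: "time_ordered_exp n T H V" and p: "bij_betw p {..<d} B" and B: "B \<subseteq> {..<dimH n}"
    and H_carrier: "\<And>t. t \<in> {0..T} \<Longrightarrow> H t \<in> carrier_mat (dimH n) (dimH n)"
    and H_block: "\<And>t x z. t \<in> {0..T} \<Longrightarrow> x \<in> B \<Longrightarrow> z < dimH n \<Longrightarrow> z \<notin> B \<Longrightarrow> H t $$ (x,z) = 0"
    and i: "i < d" and j: "j < d" and t: "t \<in> {0..T}"
  shows "((\<lambda>s. \<Sum>l<d. (- \<i> * H s $$ (p i, p l)) * V s $$ (p l, p j)) has_integral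
      (V t $$ (p i, p j) - (if i = j then 1 else 0))) {0..t}"
proof -
  let ?N = "dimH n"
  have pB: "p l \<in> B" if "l < d" for l
    using p that unfolding bij_betw_def by auto
  then have pN: "p l < ?N" if "l < d" for l
    using B that by auto
  have V_carrier: "V s \<in> carrier_mat ?N ?N" if "s \<in> {0..T}" for s
    using V that unfolding time_ordered_exp_def by blast
  have restrict: "- \<i> * (H s * V s) $$ (p i, p j) = (\<Sum>l<d. (- \<i> * H s $$ (p i, p l)) * V s $$ (p l, p j))"
    if s: "s \<in> {0..T}" for s
  proof -
    have "(H s * V s) $$ (p i, p j) = (\<Sum>z<?N. H s $$ (p i, z) * V s $$ (z, p j))"
      by (rule index_mult_mat_sum[OF H_carrier[OF s] V_carrier[OF s] pN[OF i] pN[OF j]])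
    also have "\<dots> = (\<Sum>z\<in>B. H s $$ (p i, z) * V s $$ (z, p j))"
    proof (rule sum.mono_neutral_right)
      show "\<forall>z\<in>{..<?N} - B. H s $$ (p i, z) * V s $$ (z, p j) = 0"
        using H_block[OF s pB[OF i]] by simp
    qed (use B in auto)
    also have "\<dots> = (\<Sum>l<d. H s $$ (p i, p l) * V s $$ (p l, p j))"
      using sum.reindex_bij_betw[OF p, of "\<lambda>z. H s $$ (p i, z) * V s $$ (z, p j)"] by simp
    finally show ?thesis
      by (simp add: sum_distrib_left mult.assoc)
  qed
  have "p i = p j \<longleftrightarrow> i = j"
    using p i j unfolding bij_betw_def inj_on_def by auto
  then have one: "1\<^sub>m ?N $$ (p i, p j) = (if i = j then 1 else 0)"
    using pN[OF i] pN[OF j] by simp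
  have "((\<lambda>s. - \<i> * (H s * V s) $$ (p i, p j)) has_integral
      (V t $$ (p i, p j) - 1\<^sub>m ?N $$ (p i, p j))) {0..t}"
    using V t pN[OF i] pN[OF j] unfolding time_ordered_exp_def by blast
  then show ?thesis
    unfolding one by (rule has_integral_eq[rotated]) (use t restrict in auto)
qed

lemma det_submatrix_time_ordered_exp:
  fixes h :: "nat \<Rightarrow> real \<Rightarrow> real"
  assumes T: "0 \<le> T" and V: "time_ordered_exp n T H V" and B: "B \<subseteq> {..<dimH n}"
    and H_carrier: "\<And>t. t \<in> {0..T} \<Longrightarrow> H t \<in> carrier_mat (dimH n) (dimH n)"
    and H_block: "\<And>t x z. t \<in> {0..T} \<Longrightarrow> x \<in> B \<Longrightarrow> z < dimH n \<Longrightarrow> z \<notin> B \<Longrightarrow> H t $$ (x,z) = 0"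
    and D: "finite D"
    and H_cont: "\<And>x y. x \<in> B \<Longrightarrow> y \<in> B \<Longrightarrow> continuous_on ({0..T} - D) (\<lambda>t. H t $$ (x,y))"
    and H_diag: "\<And>t x. t \<in> {0..T} \<Longrightarrow> x \<in> B \<Longrightarrow> H t $$ (x,x) = of_real (h x t)"
    and h_int: "\<And>x. x \<in> B \<Longrightarrow> h x integrable_on {0..T}"
  shows "det (submatrix (V T) B B) = exp (- \<i> * of_real (integral {0..T} (\<lambda>t. \<Sum>x\<in>B. h x t)))"
proof -
  define d where "d = card B"
  define p where "p = pick B"
  have "finite B" using B finite_subset by blast
  then have p: "bij_betw p {..<d} B"
    unfolding p_def d_def by (rule bij_betw_pick)
  then have pB: "p i \<in> B" if "i < d" for i
    using that unfolding bij_betw_def by auto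
  define A where "A s i j = - \<i> * H s $$ (p i, p j)" for s i j
  define W where "W s i j = V s $$ (p i, p j)" for s i j
  have W_eq: "((\<lambda>s. \<Sum>l<d. A s i l * W s l j) has_integral (W t i j - (if i = j then 1 else 0))) {0..t}"
    if "i < d" "j < d" "t \<in> {0..T}" for i j t
    unfolding A_def W_def using V p B H_carrier H_block that
    by (rule time_ordered_exp_block_integral_equation)
  have A_cont: "continuous_on ({0..T} - D) (\<lambda>s. A s i j)" if "i < d" "j < d" for i j
    unfolding A_def using pB that by (intro continuous_on_mult_left H_cont)
  define \<rho> where "\<rho> = integral {0..T} (\<lambda>t. \<Sum>x\<in>B. h x t)"
  have "((\<lambda>t. \<Sum>x\<in>B. h x t) has_integral \<rho>) {0..T}"
    unfolding \<rho>_def by (intro integrable_integral integrable_sum \<open>finite B\<close> h_int)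
  then have h_sum: "((\<lambda>t. - \<i> * of_real (\<Sum>x\<in>B. h x t)) has_integral - \<i> * of_real \<rho>) {0..T}"
    by (intro has_integral_mult_right has_integral_of_real)
  have trace_A: "(\<Sum>i<d. A t i i) = - \<i> * of_real (\<Sum>x\<in>B. h x t)" if t: "t \<in> {0..T}" for t
  proof -
    have "(\<Sum>i<d. H t $$ (p i, p i)) = (\<Sum>x\<in>B. H t $$ (x,x))"
      using sum.reindex_bij_betw[OF p, of "\<lambda>x. H t $$ (x,x)"] by simp
    then show ?thesis
      unfolding A_def sum_distrib_left[symmetric] using H_diag[OF t] by simp
  qed
  have tr: "((\<lambda>t. \<Sum>i<d. A t i i) has_integral - \<i> * of_real \<rho>) {0..T}"
    using has_integral_cong[of "{0..T}", OF trace_A] h_sum by simp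
  have "V T \<in> carrier_mat (dimH n) (dimH n)"
    using V T unfolding time_ordered_exp_def by auto
  then have "{x. x < dim_row (V T) \<and> x \<in> B} = B" "{x. x < dim_col (V T) \<and> x \<in> B} = B"
    using B by auto
  then have "submatrix (V T) B B = mat d d (\<lambda>(i,j). W T i j)"
    unfolding submatrix_def d_def W_def p_def by simp
  also have "det \<dots> = exp (integral {0..T} (\<lambda>s. \<Sum>i<d. A s i i))"
    using det_mat_Liouville[OF T D W_eq A_cont has_integral_integrable[OF tr]] .
  finally show ?thesis
    using tr by (simp add: integral_unique \<rho>_def)
qed

lemma beta_cong_if_det_weight_blocks:
  assumes "\<And>m. det (submatrix V (weight_space n m) (weight_space n m)) = exp (- \<i> * of_real (\<rho> m))"
  shows "cong_2pi (beta n V k) (- (\<Sum>m\<le>k. (-1)^m * real ((n-m) choose (k-m)) * \<rho> m))"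
proof -
  have "\<exists>z::int. theta n V m = - \<rho> m - of_int z * (2 * pi)" for m
  proof -
    obtain z where "Im (- \<i> * of_real (\<rho> m)) - of_int z * (2 * pi) = Arg (exp (- \<i> * of_real (\<rho> m)))"
      using Arg_exp_diff_2pi by blast
    then show ?thesis
      unfolding theta_def assms by (intro exI[of _ z]) simp
  qed
  then obtain z where z: "\<And>m. theta n V m = - \<rho> m - of_int (z m) * (2 * pi)"
    by metis
  show ?thesis
    unfolding cong_2pi_def beta_def z
    by (rule exI[of _ "- (\<Sum>m\<le>k. (-1)^m * int ((n-m) choose (k-m)) * z m)"])
      (simp add: algebra_simps sum_negf sum_subtractf sum_distrib_left)
qed

lemma hermitian_op_diag_real:
  assumes "hermitian_op n A" and "x < dimH n"
  shows "of_real (Re (A $$ (x,x))) = A $$ (x,x)"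
proof -
  have "A $$ (x,x) = cnj (A $$ (x,x))"
    using assms unfolding hermitian_op_def by blast
  then show ?thesis
    by (metis Reals_cnj_iff complex_is_Real_iff of_real_Re)
qed

lemma alternating_weight_sum_diag:
  fixes c :: "nat set \<Rightarrow> real"
  assumes "k_local n (k - 1) A" and "1 \<le> k"
  shows "(\<Sum>m\<le>k. (-1)^m * real ((n-m) choose (k-m)) * (\<Sum>x\<in>weight_space n m.
            Re (A $$ (x,x)) + (\<Sum>S\<in>{S. S \<subseteq> {..<n} \<and> card S = k}. c S * Zprod_eigenvalue S x)))
       = 2^k * (\<Sum>S\<in>{S. S \<subseteq> {..<n} \<and> card S = k}. c S)"
proof -
  let ?KS = "{S. S \<subseteq> {..<n} \<and> card S = k}"
  let ?w = "\<lambda>m. (-1)^m * real ((n-m) choose (k-m))"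
  have "(\<Sum>m\<le>k. ?w m * (\<Sum>x\<in>weight_space n m. \<Sum>S\<in>?KS. c S * Zprod_eigenvalue S x))
      = (\<Sum>S\<in>?KS. c S * (\<Sum>m\<le>k. ?w m * (\<Sum>x\<in>weight_space n m. Zprod_eigenvalue S x)))"
    by (simp add: sum_distrib_left sum.swap[of _ ?KS] mult.left_commute)
  also have "\<dots> = (\<Sum>S\<in>?KS. c S * 2^k)"
  proof (rule sum.cong[OF refl])
    fix S assume "S \<in> ?KS"
    then show "c S * (\<Sum>m\<le>k. ?w m * (\<Sum>x\<in>weight_space n m. Zprod_eigenvalue S x)) = c S * 2^k"
      using alternating_weight_sum_Zprod_eigenvalue[where S=S and n=n and k=k] by simp
  qed
  also have "\<dots> = 2^k * (\<Sum>S\<in>?KS. c S)"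
    by (simp add: sum_distrib_left mult.commute)
  moreover have "(\<Sum>m\<le>k. ?w m * (\<Sum>x\<in>weight_space n m. Re (A $$ (x,x)))) = 0"
    using assms by (intro alternating_weight_sum_Re_diag_eq_0_if_k_local) auto
  ultimately show ?thesis
    by (simp add: sum.distrib distrib_left)
qed

lemma hamiltonian_entries_continuous_off_finite:
  fixes c :: "nat set \<Rightarrow> nat \<Rightarrow> nat \<Rightarrow> complex"
  assumes "finite KS"
    and Hk1_pc: "\<forall>x < dimH n. \<forall>y < dimH n. piecewise_cont T (\<lambda>t. Hk1 t $$ (x,y))"
    and a_pc: "\<And>S. S \<in> KS \<Longrightarrow> piecewise_cont T (a S)"
    and H_entry: "\<And>t x y. t \<in> {0..T} \<Longrightarrow> x < dimH n \<Longrightarrow> y < dimH n \<Longrightarrow>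
        H t $$ (x,y) = Hk1 t $$ (x,y) + (\<Sum>S\<in>KS. of_real (a S t) * c S x y)"
  obtains D where "finite D"
    and "\<And>x y. x < dimH n \<Longrightarrow> y < dimH n \<Longrightarrow> continuous_on ({0..T} - D) (\<lambda>t. H t $$ (x,y))"
proof -
  let ?N = "dimH n"
  obtain D1 where D1: "finite D1" "\<And>xy. xy \<in> {..<?N} \<times> {..<?N} \<Longrightarrow>
      continuous_on ({0..T} - D1) (\<lambda>t. Hk1 t $$ xy)"
    by (rule piecewise_cont_obtain_common_continuity_set[of "{..<?N} \<times> {..<?N}" T "\<lambda>xy t. Hk1 t $$ xy"])
      (use Hk1_pc in auto)
  obtain D2 where D2: "finite D2" "\<And>S. S \<in> KS \<Longrightarrow> continuous_on ({0..T} - D2) (a S)"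
    by (rule piecewise_cont_obtain_common_continuity_set[OF \<open>finite KS\<close>]) (use a_pc in auto)
  show thesis
  proof (rule that[of "D1 \<union> D2"])
    show "finite (D1 \<union> D2)" using D1(1) D2(1) by simp
    fix x y assume xy: "x < ?N" "y < ?N"
    show "continuous_on ({0..T} - (D1 \<union> D2)) (\<lambda>t. H t $$ (x,y))"
    proof (rule continuous_on_eq)
      show "continuous_on ({0..T} - (D1 \<union> D2))
          (\<lambda>t. Hk1 t $$ (x,y) + (\<Sum>S\<in>KS. of_real (a S t) * c S x y))"
        using xy
        by (intro continuous_intros continuous_on_subset[OF D1(2)] continuous_on_subset[OF D2(2)]) auto
    qed (use H_entry xy in auto)
  qed
qed

lemma integrable_on_hamiltonian_diag:
  assumes "0 \<le> T" and "x < dimH n"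
    and "\<forall>x < dimH n. \<forall>y < dimH n. piecewise_cont T (\<lambda>t. Hk1 t $$ (x,y))"
    and "\<forall>S. S \<subseteq> {..<n} \<and> card S = k \<longrightarrow> piecewise_cont T (a S)"
  shows "(\<lambda>t. Re (Hk1 t $$ (x,x)) + (\<Sum>S\<in>{S. S \<subseteq> {..<n} \<and> card S = k}. a S t * Zprod_eigenvalue S x))
      integrable_on {0..T}"
proof -
  have "(\<lambda>t. Hk1 t $$ (x,x)) integrable_on {0..T}"
    using assms by (simp add: piecewise_cont_integrable_on)
  then have "(\<lambda>t. Re (Hk1 t $$ (x,x))) integrable_on {0..T}"
    using integrable_linear[OF _ bounded_linear_Re] by (simp add: comp_def)
  moreover have "finite {S. S \<subseteq> {..<n} \<and> card S = k}"
    by (rule finite_subset[of _ "Pow {..<n}"]) auto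
  ultimately show ?thesis
    using assms
    by (intro integrable_add integrable_sum integrable_on_mult_left)
      (auto intro: piecewise_cont_integrable_on)
qed

lemma det_weight_block_hamiltonian:
  fixes n k :: nat and Hk1 H V :: "real \<Rightarrow> complex mat" and a :: "nat set \<Rightarrow> real \<Rightarrow> real"
  defines "KS \<equiv> {S. S \<subseteq> {..<n} \<and> card S = k}"
  assumes T: "0 \<le> T"
    and Hk1_herm: "\<forall>t\<in>{0..T}. hermitian_op n (Hk1 t)"
    and Hk1_pc: "\<forall>x < dimH n. \<forall>y < dimH n. piecewise_cont T (\<lambda>t. Hk1 t $$ (x,y))"
    and a_pc: "\<forall>S. S \<subseteq> {..<n} \<and> card S = k \<longrightarrow> piecewise_cont T (a S)"
    and H_def: "\<forall>t\<in>{0..T}. H t = Hk1 t + mat (dimH n) (dimH n)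
        (\<lambda>(x,y). \<Sum>S\<in>KS. of_real (a S t) * Zprod n S $$ (x,y))"
    and H_U1: "\<forall>t\<in>{0..T}. U1_invariant n (H t)"
    and V: "time_ordered_exp n T H V"
  shows "det (submatrix (V T) (weight_space n m) (weight_space n m)) = exp (- \<i> * of_real
      (integral {0..T} (\<lambda>t. \<Sum>x\<in>weight_space n m. Re (Hk1 t $$ (x,x)) + (\<Sum>S\<in>KS. a S t * Zprod_eigenvalue S x))))"
proof -
  let ?N = "dimH n"
  have "finite KS"
    unfolding KS_def by (rule finite_subset[of _ "Pow {..<n}"]) auto
  have Hk1_carrier: "Hk1 t \<in> carrier_mat ?N ?N" if "t \<in> {0..T}" for t
    using Hk1_herm that unfolding hermitian_op_def by blast
  then have H_carrier: "H t \<in> carrier_mat ?N ?N" if "t \<in> {0..T}" for t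
    using H_def that by auto
  have H_entry: "H t $$ (x,y) = Hk1 t $$ (x,y) + (\<Sum>S\<in>KS. of_real (a S t) * Zprod n S $$ (x,y))"
    if "t \<in> {0..T}" "x < ?N" "y < ?N" for t x y
    using H_def Hk1_carrier that by simp
  obtain D where "finite D" and H_cont: "\<And>x y. x < ?N \<Longrightarrow> y < ?N \<Longrightarrow> continuous_on ({0..T} - D) (\<lambda>t. H t $$ (x,y))"
    by (rule hamiltonian_entries_continuous_off_finite[OF \<open>finite KS\<close> Hk1_pc _ H_entry])
      (use a_pc in \<open>auto simp: KS_def\<close>)
  show ?thesis
  proof (rule det_submatrix_time_ordered_exp[OF T V _ H_carrier _ \<open>finite D\<close>])
    show "H t $$ (x,z) = 0"
      if "t \<in> {0..T}" "x \<in> weight_space n m" "z < ?N" "z \<notin> weight_space n m" for t x z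
      using that by (intro U1_invariant_entry_eq_0[OF H_U1[rule_format] H_carrier])
        (auto simp: weight_space_def)
    show "H t $$ (x,x) = of_real (Re (Hk1 t $$ (x,x)) + (\<Sum>S\<in>KS. a S t * Zprod_eigenvalue S x))"
      if "t \<in> {0..T}" "x \<in> weight_space n m" for t x
      using that Hk1_herm hermitian_op_diag_real[of n "Hk1 t" x]
      by (simp add: H_entry Zprod_diag weight_space_def)
  qed (use H_cont integrable_on_hamiltonian_diag[OF T _ Hk1_pc a_pc] in \<open>auto simp: weight_space_def KS_def\<close>)
qed

theorem mainTheorem12:
  fixes n k :: nat and T :: real
    and Hk1 :: "real \<Rightarrow> complex mat"
    and a :: "nat set \<Rightarrow> real \<Rightarrow> real"
    and H V :: "real \<Rightarrow> complex mat"
  assumes "1 \<le> n" and "1 \<le> k" and "k \<le> n" and "0 \<le> T"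
    and Hk1_herm: "\<forall>t\<in>{0..T}. hermitian_op n (Hk1 t)"
    and Hk1_U1: "\<forall>t\<in>{0..T}. U1_invariant n (Hk1 t)"
    and Hk1_local: "\<forall>t\<in>{0..T}. k_local n (k - 1) (Hk1 t)"
    and Hk1_pc: "\<forall>x < dimH n. \<forall>y < dimH n. piecewise_cont T (\<lambda>t. Hk1 t $$ (x,y))"
    and a_pc: "\<forall>S. S \<subseteq> {..<n} \<and> card S = k \<longrightarrow> piecewise_cont T (a S)"
    and H_def: "\<forall>t\<in>{0..T}. H t = Hk1 t + mat (dimH n) (dimH n)
        (\<lambda>(x,y). \<Sum>S\<in>{S. S \<subseteq> {..<n} \<and> card S = k}. of_real (a S t) * Zprod n S $$ (x,y))"
    and H_U1: "\<forall>t\<in>{0..T}. U1_invariant n (H t)"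
    and V_toe: "time_ordered_exp n T H V"
  shows "cong_2pi (beta n (V T) k)
           (- (2 ^ k) * integral {0..T} (\<lambda>t. \<Sum>S\<in>{S. S \<subseteq> {..<n} \<and> card S = k}. a S t))"
proof -
  let ?KS = "{S. S \<subseteq> {..<n} \<and> card S = k}"
  let ?w = "\<lambda>m. (-1)^m * real ((n-m) choose (k-m))"
  define h where "h x t = Re (Hk1 t $$ (x,x)) + (\<Sum>S\<in>?KS. a S t * Zprod_eigenvalue S x)" for x t
  have "cong_2pi (beta n (V T) k) (- (\<Sum>m\<le>k. ?w m * integral {0..T} (\<lambda>t. \<Sum>x\<in>weight_space n m. h x t)))"
    using det_weight_block_hamiltonian[OF \<open>0 \<le> T\<close> Hk1_herm Hk1_pc a_pc H_def H_U1 V_toe]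
    unfolding h_def by (rule beta_cong_if_det_weight_blocks)
  moreover have "(\<lambda>t. \<Sum>x\<in>weight_space n m. h x t) integrable_on {0..T}" for m
    unfolding h_def using integrable_on_hamiltonian_diag[OF \<open>0 \<le> T\<close> _ Hk1_pc a_pc]
    by (intro integrable_sum) (auto simp: weight_space_def)
  then have "(\<Sum>m\<le>k. ?w m * integral {0..T} (\<lambda>t. \<Sum>x\<in>weight_space n m. h x t))
      = integral {0..T} (\<lambda>t. \<Sum>m\<le>k. ?w m * (\<Sum>x\<in>weight_space n m. h x t))"
    by (simp add: integral_sum integrable_on_mult_right)
  moreover have "\<dots> = integral {0..T} (\<lambda>t. 2^k * (\<Sum>S\<in>?KS. a S t))"
    using Hk1_local \<open>1 \<le> k\<close> unfolding h_def
    by (intro integral_cong alternating_weight_sum_diag) auto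
  ultimately show ?thesis
    by simp
qed

end
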